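(* Let $r\ge 3$ be an integer and for $k\in\mathbb Z_{\ge0}$ put $q_k=\frac{1+r^k(r-2)}{r-1}$. Then for every $n\ge1$, the set $S=\{t\cdot(1,r,r^2,\dots,r^{n-1}) : t\in\mathbb Z_{q_n}\}\subseteq\mathbb Z_{q_n}^n$ (arithmetic modulo $q_n$) is an independent set of size $q_n$ in $C_{q_{n-1},q_n}^{\boxtimes n}$.
   Context: For positive integers $q,d$ with $q\ge 2d$, the circular graph $C_{d,q}$ has vertex set $\mathbb Z_q$, two distinct vertices $x,y$ being adjacent iff $\min\{|x-y|,q-|x-y|\}<d$ (viewing $x,y$ as integers in $\{0,\dots,q-1\}$). For a graph $G=(V,E)$, $G^{\boxtimes n}$ has vertex set $V^n$, distinct $(u_i)$, $(v_i)$ adjacent iff for every $i$ either $u_i=v_i$ or $u_iv_i\in E$. An independent set is a set of pairwise non-adjacent vertices. *)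

theory Defs
  imports Main
begin

text \<open>Vertices of the circular graph C_{d,q} are 0,...,q-1 (representing Z_q).
  Two distinct vertices x,y are adjacent iff min(|x-y|, q-|x-y|) < d.\<close>
definition circ_adj :: "nat \<Rightarrow> nat \<Rightarrow> nat \<Rightarrow> nat \<Rightarrow> bool" where
  "circ_adj d q x y \<longleftrightarrow> x < q \<and> y < q \<and> x \<noteq> y \<and>
     (let dd = (if x \<le> y then y - x else x - y) in min dd (q - dd) < d)"

definition strong_power_verts :: "'a set \<Rightarrow> nat \<Rightarrow> 'a list set" where
  "strong_power_verts V n = {xs. length xs = n \<and> set xs \<subseteq> V}"

definition strong_power_adj :: "('a \<Rightarrow> 'a \<Rightarrow> bool) \<Rightarrow> nat \<Rightarrow> 'a list \<Rightarrow> 'a list \<Rightarrow> bool" where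
  "strong_power_adj E n u v \<longleftrightarrow> u \<noteq> v \<and> (\<forall>i<n. u ! i = v ! i \<or> E (u ! i) (v ! i))"

definition independent_set :: "'a set \<Rightarrow> ('a \<Rightarrow> 'a \<Rightarrow> bool) \<Rightarrow> 'a set \<Rightarrow> bool" where
  "independent_set V E S \<longleftrightarrow> S \<subseteq> V \<and> (\<forall>u\<in>S. \<forall>v\<in>S. \<not> E u v)"

text \<open>q_k = (1 + r^k (r-2)) / (r-1); the division is exact for r \<ge> 2.\<close>
definition qseq :: "nat \<Rightarrow> nat \<Rightarrow> nat" where
  "qseq r k = (1 + r ^ k * (r - 2)) div (r - 1)"

end

theory Submission
  imports Defs
begin

text \<open>Suppose the words of a \<noteq> b are adjacent and let z_i be the residue of (a - b) r^i
  modulo q_n of least absolute value, so |z_i| < q_(n-1) and q_n divides r z_i - z_(i+1).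
  Since q_n = r q_(n-1) - 1, each carry c_i = (r z_i - z_(i+1)) / q_n lies in {-1, 0, 1}, and
  z_i' = z_i - c_i q_(n-1) satisfies r z_i' + c_i = z_(i+1). So the shortened sequence z' has the
  same shape one level down, up to errors e_i = c_i that never share the sign of z_i'; this sign
  condition is what keeps the accumulated errors in {-1, 0, 1}. After n - 1 descents a single term
  bounded by q_0 = 1 is left, so it vanishes, and unwinding gives z_0 = 0, i.e. a = b.\<close>

lemma qseq_closed_form:
  assumes "r \<ge> 2"
  shows "(int r - 1) * int (qseq r k) = 1 + int r ^ k * (int r - 2)"
proof -
  have dvd: "(int r - 1) dvd (1 + int r ^ j * (int r - 2))" for j
  proof (induction j)
    case (Suc j)
    have "1 + int r ^ Suc j * (int r - 2) = int r * (1 + int r ^ j * (int r - 2)) - (int r - 1)"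
      by (simp add: algebra_simps)
    then show ?case by (simp only:) (intro dvd_diff dvd_mult Suc.IH dvd_refl)
  qed simp
  have "int (qseq r k) = (1 + int r ^ k * (int r - 2)) div (int r - 1)"
    using assms unfolding qseq_def by (simp add: zdiv_int of_nat_diff)
  then show ?thesis using dvd[of k] by simp
qed

lemma qseq_0: "r \<ge> 2 \<Longrightarrow> qseq r 0 = 1"
  using qseq_closed_form[of r 0] by simp

lemma qseq_Suc:
  assumes "r \<ge> 2"
  shows "int (qseq r (Suc k)) = int r * int (qseq r k) - 1"
proof -
  have "(int r - 1) * int (qseq r (Suc k)) = (int r - 1) * (int r * int (qseq r k) - 1)"
    unfolding qseq_closed_form[OF assms] right_diff_distrib mult.left_commute[of "int r - 1"]
    by (simp add: algebra_simps)
  then show ?thesis using assms by simp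
qed

locale qseq_recurrence =
  fixes r :: int and q :: "nat \<Rightarrow> int"
  assumes r_ge_3: "r \<ge> 3"
    and q_0: "q 0 = 1"
    and q_Suc: "q (Suc k) = r * q k - 1"
begin

lemma q_pos: "1 \<le> q k"
proof (induction k)
  case (Suc k)
  then have "3 \<le> r * q k" using r_ge_3 mult_mono[of 3 r 1 "q k"] by simp
  then show ?case by (simp add: q_Suc)
qed (simp add: q_0)

lemma q_less_Suc: "q k < q (Suc k)"
proof -
  have "3 * q k \<le> r * q k" using mult_right_mono[OF r_ge_3, of "q k"] q_pos[of k] by simp
  then show ?thesis using q_pos[of k] unfolding q_Suc by linarith
qed

lemma abs_less_q_if_scaled:
  assumes "r * x + e = y" "\<bar>y\<bar> < q (Suc k)" "\<bar>e\<bar> \<le> 1"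
  shows "\<bar>x\<bar> < q k"
proof -
  have "r * \<bar>x\<bar> = \<bar>y - e\<bar>"
    using assms(1) r_ge_3 by (auto simp: abs_mult)
  also have "\<dots> < r * q k"
    using assms(2,3) unfolding q_Suc by linarith
  finally have "r * \<bar>x\<bar> < r * q k" .
  then show ?thesis using r_ge_3 by simp
qed

lemma abs_carry_le_1:
  assumes x: "\<bar>x\<bar> < q k" and y: "\<bar>y\<bar> < q k" and e: "\<bar>e\<bar> \<le> 1"
    and c: "c * q (Suc k) = r * x - y + e"
  shows "\<bar>c\<bar> \<le> 1"
proof -
  have rx: "r * \<bar>x\<bar> \<le> r * (q k - 1)"
    using x r_ge_3 by (intro mult_left_mono) auto
  have "\<bar>c\<bar> * q (Suc k) = \<bar>r * x - y + e\<bar>"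
    using c q_pos[of "Suc k"] by (metis abs_mult abs_of_pos zero_less_one order_less_le_trans)
  also have "\<dots> \<le> r * \<bar>x\<bar> + \<bar>y\<bar> + \<bar>e\<bar>"
    using r_ge_3 abs_mult[of r x] by (smt (verit))
  also have "\<dots> < 2 * q (Suc k)"
    using rx y e q_pos[of k] r_ge_3 mult_right_mono[OF r_ge_3, of "q k"]
    unfolding q_Suc right_diff_distrib by linarith
  finally show ?thesis
    using q_pos[of "Suc k"] by simp
qed

lemma carry_digit:
  assumes x: "\<bar>x\<bar> < q k" and y: "\<bar>y\<bar> < q k" and e: "\<bar>e\<bar> \<le> 1" "e * x \<le> 0"
    and c: "c * q (Suc k) = r * x - y + e"
  shows "\<bar>e + c\<bar> \<le> 1" and "(e + c) * (x - c * q k) \<le> 0"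
    and "r * (x - c * q k) + (e + c) = y"
proof -
  have "\<bar>c\<bar> \<le> 1" using abs_carry_le_1[OF x y e(1) c] .
  then consider "c = 0" | "c = 1" | "c = -1" by linarith
  then have "\<bar>e + c\<bar> \<le> 1 \<and> (e + c) * (x - c * q k) \<le> 0"
  proof cases
    case 1
    then show ?thesis using e by simp
  next
    case 2
    have "0 < x"
    proof (rule ccontr)
      assume "\<not> 0 < x"
      then have "r * x \<le> 0" using r_ge_3 by (simp add: mult_nonneg_nonpos)
      then show False using c 2 y e q_less_Suc[of k] by simp
    qed
    then have "e \<le> 0" using e(2) by (simp add: mult_le_0_iff)
    then show ?thesis using 2 e x \<open>0 < x\<close> by (simp add: mult_le_0_iff)
  next
    case 3
    have "x < 0"
    proof (rule ccontr)
      assume "\<not> x < 0"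
      then have "0 \<le> r * x" using r_ge_3 by simp
      then show False using c 3 y e q_less_Suc[of k] by simp
    qed
    then have "0 \<le> e" using e(2) by (simp add: mult_le_0_iff)
    then show ?thesis using 3 e x \<open>x < 0\<close> by (simp add: mult_le_0_iff)
  qed
  then show "\<bar>e + c\<bar> \<le> 1" and "(e + c) * (x - c * q k) \<le> 0" by auto
  show "r * (x - c * q k) + (e + c) = y"
    using c by (simp add: q_Suc algebra_simps)
qed

lemma zero_if_small_orbit:
  assumes "\<And>j. j \<le> M \<Longrightarrow> \<bar>z j\<bar> < q M"
    and "\<And>j. j < M \<Longrightarrow> q (Suc M) dvd r * z j - z (Suc j) + e j"
    and "\<And>j. j < M \<Longrightarrow> \<bar>e j\<bar> \<le> 1 \<and> e j * z j \<le> 0"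
  shows "z 0 = 0"
  using assms
proof (induction M arbitrary: z e)
  case 0
  then show ?case using q_0 by force
next
  case (Suc N)
  define c where "c j = (r * z j - z (Suc j) + e j) div q (Suc (Suc N))" for j
  have c: "c j * q (Suc (Suc N)) = r * z j - z (Suc j) + e j" if "j < Suc N" for j
    using Suc.prems(2)[OF that] unfolding c_def by simp
  define z' where "z' j = z j - c j * q (Suc N)" for j
  define e' where "e' j = e j + c j" for j
  have digit: "\<bar>e' j\<bar> \<le> 1" "e' j * z' j \<le> 0" "r * z' j + e' j = z (Suc j)"
    if "j < Suc N" for j
    using carry_digit[where x = "z j" and y = "z (Suc j)" and e = "e j" and c = "c j"]
      Suc.prems(1)[of j] Suc.prems(1)[of "Suc j"] Suc.prems(3)[of j] c[of j] that
    unfolding z'_def e'_def by auto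
  have "z' 0 = 0"
  proof (rule Suc.IH)
    show "\<bar>z' j\<bar> < q N" if "j \<le> N" for j
      using abs_less_q_if_scaled[OF digit(3) Suc.prems(1)] digit(1) that by simp
    show "q (Suc N) dvd r * z' j - z' (Suc j) + e' j" if "j < N" for j
    proof -
      have "r * z' j - z' (Suc j) + e' j = c (Suc j) * q (Suc N)"
        using digit(3)[of j] that unfolding z'_def by simp
      then show ?thesis by simp
    qed
    show "\<bar>e' j\<bar> \<le> 1 \<and> e' j * z' j \<le> 0" if "j < N" for j
      using digit that by simp
  qed
  then have "\<bar>c 0\<bar> * q (Suc N) < q (Suc N)"
    using Suc.prems(1)[of 0] q_pos[of "Suc N"] unfolding z'_def by (simp add: abs_mult)
  then have "c 0 = 0"
    using q_pos[of "Suc N"] by (simp add: mult_less_cancel_right1)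
  then show ?case using \<open>z' 0 = 0\<close> unfolding z'_def by simp
qed

end

lemma qseq_recurrence_qseq: "r \<ge> 3 \<Longrightarrow> qseq_recurrence (int r) (\<lambda>k. int (qseq r k))"
proof
  assume "r \<ge> 3"
  then show "3 \<le> int r" "int (qseq r 0) = 1" "int (qseq r (Suc k)) = int r * int (qseq r k) - 1" for k
    by (simp_all add: qseq_0 qseq_Suc)
qed

lemma circ_close_imp_small_difference:
  assumes "u < Q" "w < Q" "0 < D" "u = w \<or> circ_adj D Q u w"
  obtains y :: int where "int Q dvd y - (int u - int w)" "\<bar>y\<bar> < int D"
proof -
  consider "\<bar>int u - int w\<bar> < int D"
    | "u < w" "int Q - (int w - int u) < int D"
    | "w < u" "int Q - (int u - int w) < int D"
    using assms(3,4) unfolding circ_adj_def Let_def by (cases "u \<le> w") (auto simp: min_def split: if_splits)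
  then show thesis
  proof cases
    case 1
    then show thesis by (intro that[of "int u - int w"]) auto
  next
    case 2
    then show thesis using assms(2) by (intro that[of "int u - int w + int Q"]) auto
  next
    case 3
    then show thesis using assms(1) by (intro that[of "int u - int w - int Q"]) auto
  qed
qed

definition power_orbit_word :: "nat \<Rightarrow> nat \<Rightarrow> nat \<Rightarrow> nat \<Rightarrow> nat list" where
  "power_orbit_word r Q n t = map (\<lambda>i. (t * r ^ i) mod Q) [0..<n]"

lemma power_orbit_word_nth: "i < n \<Longrightarrow> power_orbit_word r Q n t ! i = (t * r ^ i) mod Q"
  unfolding power_orbit_word_def by (simp del: upt.simps)

lemma power_orbit_word_in_verts:
  "0 < Q \<Longrightarrow> power_orbit_word r Q n t \<in> strong_power_verts {0..<Q} n"
  unfolding power_orbit_word_def strong_power_verts_def by auto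

lemma inj_on_power_orbit_word:
  assumes "1 \<le> n"
  shows "inj_on (power_orbit_word r Q n) {0..<Q}"
proof (rule inj_onI)
  fix a b assume ab: "a \<in> {0..<Q}" "b \<in> {0..<Q}"
    and "power_orbit_word r Q n a = power_orbit_word r Q n b"
  then have "power_orbit_word r Q n a ! 0 = power_orbit_word r Q n b ! 0" by simp
  then have "a mod Q = b mod Q" using assms by (simp add: power_orbit_word_nth)
  then show "a = b" using ab by simp
qed

lemma power_orbit_words_close_imp_small_residue:
  assumes Q: "0 < Q" and D: "0 < D" and i: "i < n"
    and close: "power_orbit_word r Q n a ! i = power_orbit_word r Q n b ! i
      \<or> circ_adj D Q (power_orbit_word r Q n a ! i) (power_orbit_word r Q n b ! i)"
  obtains y :: int where "int Q dvd y - (int a - int b) * int r ^ i" "\<bar>y\<bar> < int D"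
proof -
  let ?u = "power_orbit_word r Q n a ! i" and ?w = "power_orbit_word r Q n b ! i"
  have "?u < Q" "?w < Q" using Q i by (simp_all add: power_orbit_word_nth)
  then obtain y where y: "int Q dvd y - (int ?u - int ?w)" "\<bar>y\<bar> < int D"
    using circ_close_imp_small_difference[OF _ _ D close] by blast
  have word_dvd: "int Q dvd int (power_orbit_word r Q n t ! i) - int t * int r ^ i" for t
    using i dvd_minus_mod[of "int Q" "int (t * r ^ i)"]
    by (simp add: power_orbit_word_nth of_nat_mod dvd_diff_commute)
  have "y - (int a - int b) * int r ^ i
      = (y - (int ?u - int ?w)) + (int ?u - int a * int r ^ i) - (int ?w - int b * int r ^ i)"
    by (simp add: algebra_simps)
  then have "int Q dvd y - (int a - int b) * int r ^ i"
    using dvd_diff[OF dvd_add[OF y(1) word_dvd[of a]] word_dvd[of b]] by (simp only:)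
  then show thesis using y(2) that by blast
qed

lemma power_orbit_words_not_adjacent:
  assumes r: "r \<ge> 3" and ab: "a < qseq r (Suc m)" "b < qseq r (Suc m)"
  shows "\<not> strong_power_adj (circ_adj (qseq r m) (qseq r (Suc m))) (Suc m)
           (power_orbit_word r (qseq r (Suc m)) (Suc m) a) (power_orbit_word r (qseq r (Suc m)) (Suc m) b)"
  (is "\<not> strong_power_adj (circ_adj ?D ?Q) _ (?w a) (?w b)")
proof
  interpret qseq_recurrence "int r" "\<lambda>k. int (qseq r k)"
    using qseq_recurrence_qseq[OF r] .
  assume adj: "strong_power_adj (circ_adj ?D ?Q) (Suc m) (?w a) (?w b)"
  have "\<exists>y. int ?Q dvd y - (int a - int b) * int r ^ i \<and> \<bar>y\<bar> < int ?D" if im: "i \<le> m" for i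
  proof -
    have QD: "0 < ?Q" "0 < ?D" using q_pos[of m] q_pos[of "Suc m"] by simp_all
    have close: "?w a ! i = ?w b ! i \<or> circ_adj ?D ?Q (?w a ! i) (?w b ! i)"
      using adj im unfolding strong_power_adj_def by auto
    obtain y where "int ?Q dvd y - (int a - int b) * int r ^ i" "\<bar>y\<bar> < int ?D"
      by (rule power_orbit_words_close_imp_small_residue[OF QD _ close]) (use im in simp)
    then show ?thesis by blast
  qed
  then have "\<exists>z. \<forall>i. i \<le> m \<longrightarrow> int ?Q dvd z i - (int a - int b) * int r ^ i \<and> \<bar>z i\<bar> < int ?D"
    by (intro choice) blast
  then obtain z where z_dvd: "\<And>i. i \<le> m \<Longrightarrow> int ?Q dvd z i - (int a - int b) * int r ^ i"
    and z_small: "\<And>i. i \<le> m \<Longrightarrow> \<bar>z i\<bar> < int ?D"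
    by blast
  have "z 0 = 0"
  proof (rule zero_if_small_orbit[where e = "\<lambda>_. 0"])
    show "\<bar>z j\<bar> < int ?D" if "j \<le> m" for j using z_small that .
    show "int ?Q dvd int r * z j - z (Suc j) + 0" if "j < m" for j
    proof -
      have orbit: "int r * z j - z (Suc j) + 0 = int r * (z j - (int a - int b) * int r ^ j)
          - (z (Suc j) - (int a - int b) * int r ^ Suc j)"
        by (simp add: algebra_simps)
      show ?thesis
        unfolding orbit by (rule dvd_diff[OF dvd_mult[OF z_dvd] z_dvd]) (use that in auto)
    qed
  qed simp
  then have "int ?Q dvd int a - int b" using z_dvd[of 0] by (simp add: dvd_diff_commute)
  then have "a = b" using ab dvd_imp_le_int[of "int a - int b" "int ?Q"] by linarith
  then show False using adj unfolding strong_power_adj_def by simp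
qed

theorem theorem9p3:
  fixes r n :: nat
  assumes "r \<ge> 3" and "n \<ge> 1"
  defines "S \<equiv> (\<lambda>t. map (\<lambda>i. (t * r ^ i) mod qseq r n) [0..<n]) ` {0..<qseq r n}"
  shows "independent_set (strong_power_verts {0..<qseq r n} n)
           (strong_power_adj (circ_adj (qseq r (n - 1)) (qseq r n)) n) S
         \<and> card S = qseq r n"
proof -
  interpret qseq_recurrence "int r" "\<lambda>k. int (qseq r k)"
    using qseq_recurrence_qseq[OF assms(1)] .
  obtain m where n: "n = Suc m" using assms(2) by (cases n) auto
  have S: "S = power_orbit_word r (qseq r n) n ` {0..<qseq r n}"
    unfolding S_def power_orbit_word_def ..
  have "independent_set (strong_power_verts {0..<qseq r n} n)
      (strong_power_adj (circ_adj (qseq r (n - 1)) (qseq r n)) n) S"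
    unfolding independent_set_def S
    using power_orbit_word_in_verts q_pos[of n] power_orbit_words_not_adjacent[OF assms(1)]
    by (auto simp: n)
  moreover have "card S = qseq r n"
    unfolding S using card_image[OF inj_on_power_orbit_word[OF assms(2)]] by simp
  ultimately show ?thesis ..
qed

end
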